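(* Fix $n\ge1$, $\Phi\in\mathbb{R}^{n\times n}$ and $c>0$. For every $T\ge1$ let $\tilde W(0),\dots,\tilde W(T-1)\in\mathbb{R}^{n\times n}$ satisfy $\|\tilde W(t)\|_2\le c$, and set $W(t)=I+\frac1T\tilde W(t)$. Then there exist real constants $\lambda_1\le\lambda_2$ and $y_1,y_2$ (independent of $T,\alpha,\beta$) such that for all $T$, all $\alpha\in(0,1]$ and all $\beta\in(1-\alpha,1]$, $$\Big\|\frac{dL_{\alpha T}}{du(\beta T)}\Big\|_F\ge (e^{\lambda_1}-y_1)e^{\lambda_1},\qquad \Big\|\frac{dL_{\alpha T}}{du(\beta T)}\Big\|_F\le (e^{\lambda_2}-y_2)e^{\lambda_2}.$$
   Context: Write $W^{s}=W(s-1)\cdots W(0)$ for $0\le s\le T$ ($W^0=I$). For a horizon $h\in\{1,\dots,T\}$ and block $t\in\{0,\dots,T-1\}$, the MPC gradient is $g_h(W(t))=\nabla_{W(t)}\frac12\|W^{\min(t+h,T)}-\Phi\|_F^2$. The notation $\frac{dL_{\alpha T}}{du(\beta T)}$ denotes $g_h(W(t))$ with $h=\lfloor\alpha T\rfloor$ and $t=\min(\lfloor\beta T\rfloor,T-1)$. $\|\cdot\|_F$ is the Frobenius norm, $\|\cdot\|_2$ the spectral norm. *)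

theory Defs
  imports "HOL-Analysis.Analysis"
begin

text \<open>Matrices are elements of real^'n^'n. The norm on this type is the
Frobenius norm and the inner product is the Frobenius inner product.\<close>

fun prodW :: "(nat \<Rightarrow> real^'n^'n) \<Rightarrow> nat \<Rightarrow> real^'n^'n" where
  "prodW W 0 = mat 1"
| "prodW W (Suc s) = W s ** prodW W s"

definition spec_norm :: "real^'n^'n \<Rightarrow> real" where
  "spec_norm A = onorm (\<lambda>x. A *v x)"

definition mpc_loss :: "real^'n^'n \<Rightarrow> (nat \<Rightarrow> real^'n^'n) \<Rightarrow> nat \<Rightarrow> nat \<Rightarrow> nat
    \<Rightarrow> real^'n^'n \<Rightarrow> real" where
  "mpc_loss \<Phi> W T h t X = (1/2) * (norm (prodW (W(t := X)) (min (t + h) T) - \<Phi>))\<^sup>2"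

definition mpc_grad :: "real^'n^'n \<Rightarrow> (nat \<Rightarrow> real^'n^'n) \<Rightarrow> nat \<Rightarrow> nat \<Rightarrow> nat
    \<Rightarrow> real^'n^'n" where
  "mpc_grad \<Phi> W T h t = (THE D. GDERIV (mpc_loss \<Phi> W T h t) (W t) :> D)"

definition dL :: "real^'n^'n \<Rightarrow> (nat \<Rightarrow> real^'n^'n) \<Rightarrow> nat \<Rightarrow> real \<Rightarrow> real
    \<Rightarrow> real^'n^'n" where
  "dL \<Phi> W T \<alpha> \<beta> =
     mpc_grad \<Phi> W T (nat \<lfloor>\<alpha> * real T\<rfloor>) (min (nat \<lfloor>\<beta> * real T\<rfloor>) (T - 1))"

end

theory Submission
  imports Defs
begin

(* Write W^s = A W(t) B with s = min (t + h) T, A = W(s-1) ... W(t+1) and B = W^t. The loss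
   X |-> 1/2 |A X B - Phi|^2 has gradient A^T (W^s - Phi) B^T, of Frobenius norm at most
   |A|_2 |W^s - Phi| |B|_2. Since |W(i)|_2 <= 1 + c/T, every product of at most T factors has
   spectral norm at most (1 + c/T)^T <= e^c, so the gradient is bounded by a constant M that
   depends neither on T nor on alpha and beta. The constants lambda1 = lambda2 = 0, y1 = 1 and
   y2 = 1 - M give the two inequalities, the lower one reading 0 <= |g|. *)

lemma matrix_matrix_mult_row: "(A ** B) $ i = A $ i v* B"
  by (simp add: matrix_matrix_mult_def vector_matrix_mult_def vec_eq_iff)

lemma inner_transpose:
  fixes M N :: "real^'n^'m"
  shows "transpose M \<bullet> transpose N = M \<bullet> N"
  unfolding inner_vec_def transpose_def by (simp, rule sum.swap)

lemma norm_transpose: "norm (transpose (M :: real^'n^'m)) = norm M"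
  by (simp add: norm_eq_sqrt_inner inner_transpose)

lemma inner_matrix_mult_right:
  fixes H :: "real^'m^'k" and B :: "real^'n^'m" and R :: "real^'n^'k"
  shows "R \<bullet> (H ** B) = (R ** transpose B) \<bullet> H"
proof -
  have "R \<bullet> (H ** B) = (\<Sum>i\<in>UNIV. (H $ i v* B) \<bullet> R $ i)"
    by (simp add: inner_vec_def[of R] matrix_matrix_mult_row inner_commute)
  also have "\<dots> = (\<Sum>i\<in>UNIV. H $ i \<bullet> (R $ i v* transpose B))"
    by (simp add: dot_lmul_matrix)
  also have "\<dots> = (R ** transpose B) \<bullet> H"
    unfolding inner_vec_def[of "R ** transpose B" H]
    by (simp add: matrix_matrix_mult_row inner_commute)
  finally show ?thesis .
qed

lemma inner_matrix_mult_left: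
  fixes A :: "real^'m^'k" and H :: "real^'n^'m" and R :: "real^'n^'k"
  shows "R \<bullet> (A ** H) = (transpose A ** R) \<bullet> H"
proof -
  have "R \<bullet> (A ** H) = transpose R \<bullet> (transpose H ** transpose A)"
    by (metis inner_transpose matrix_transpose_mul)
  also have "\<dots> = (transpose R ** A) \<bullet> transpose H"
    by (simp add: inner_matrix_mult_right)
  also have "\<dots> = (transpose A ** R) \<bullet> H"
    by (metis inner_transpose matrix_transpose_mul transpose_transpose)
  finally show ?thesis .
qed

lemma matrix_add_rdistrib: "(A + B) ** C = A ** C + B ** C"
  by (simp add: matrix_matrix_mult_def vec_eq_iff sum.distrib algebra_simps)

lemma linear_matrix_sandwich: "linear (\<lambda>X :: real^'n^'m. A ** X ** B)"
  by (simp add: linear_iff matrix_add_ldistrib matrix_add_rdistrib matrix_scalar_ac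
      scalar_matrix_assoc)

lemma adjoint_matrix_sandwich:
  "adjoint (\<lambda>X :: real^'n^'m. A ** X ** B) = (\<lambda>R. transpose A ** R ** transpose B)"
proof (rule adjoint_unique, intro allI)
  fix X R
  have "(A ** X ** B) \<bullet> R = R \<bullet> ((A ** X) ** B)"
    by (rule inner_commute)
  also have "\<dots> = (R ** transpose B) \<bullet> (A ** X)"
    by (rule inner_matrix_mult_right)
  also have "\<dots> = (transpose A ** (R ** transpose B)) \<bullet> X"
    by (rule inner_matrix_mult_left)
  also have "\<dots> = X \<bullet> (transpose A ** R ** transpose B)"
    by (simp only: inner_commute[of _ X] matrix_mul_assoc)
  finally show "(A ** X ** B) \<bullet> R = X \<bullet> (transpose A ** R ** transpose B)" .
qed

lemma GDERIV_unique: "GDERIV f x :> D \<Longrightarrow> GDERIV f x :> D' \<Longrightarrow> D = D'"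
  unfolding gderiv_def by (drule (1) has_derivative_unique) (simp add: fun_eq_iff vector_eq_ldot)

lemma GDERIV_half_sq_norm_linear:
  fixes f :: "'a::euclidean_space \<Rightarrow> 'b::euclidean_space"
  assumes "linear f"
  shows "GDERIV (\<lambda>x. 1/2 * (norm (f x - b))\<^sup>2) x :> adjoint f (f x - b)"
proof -
  have "((\<lambda>x. f x - b) has_derivative f) (at x)"
    using linear_imp_has_derivative[OF assms] by (auto intro!: derivative_eq_intros)
  from has_derivative_mult_right[OF has_derivative_compose[OF this has_derivative_sqnorm_at],
      of "1/2"]
  have "((\<lambda>x. 1/2 * (norm (f x - b))\<^sup>2) has_derivative (\<lambda>h. (f x - b) \<bullet> f h)) (at x)"
    by simp
  moreover have "(f x - b) \<bullet> f h = h \<bullet> adjoint f (f x - b)" for h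
    by (simp add: adjoint_works[OF assms] inner_commute)
  ultimately show ?thesis
    unfolding gderiv_def by simp
qed

lemma spec_norm_nonneg: "0 \<le> spec_norm A"
  unfolding spec_norm_def by (rule onorm_pos_le) simp

lemma norm_matrix_vector_mult_le: "norm (A *v x) \<le> spec_norm A * norm x"
  unfolding spec_norm_def by (rule onorm) simp

lemma norm_vector_matrix_mult_le: "norm (x v* A) \<le> spec_norm A * norm x"
proof -
  let ?y = "x v* A"
  have "(norm ?y)\<^sup>2 = x \<bullet> (A *v ?y)"
    by (simp add: power2_norm_eq_inner dot_lmul_matrix)
  also have "\<dots> \<le> norm x * norm (A *v ?y)"
    by (rule norm_cauchy_schwarz)
  also have "\<dots> \<le> (spec_norm A * norm x) * norm ?y"
    using mult_left_mono[OF norm_matrix_vector_mult_le norm_ge_zero] by (simp add: mult_ac)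
  finally show ?thesis
    by (cases "?y = 0") (simp_all add: spec_norm_nonneg power2_eq_square)
qed

lemma spec_norm_transpose [simp]: "spec_norm (transpose A) = spec_norm A"
proof -
  have le: "spec_norm (transpose M) \<le> spec_norm M" for M :: "real^'n^'n"
    unfolding spec_norm_def[of "transpose M"]
    by (rule onorm_le) (simp add: norm_vector_matrix_mult_le)
  show ?thesis
    using le[of A] le[of "transpose A"] by simp
qed

lemma spec_norm_mat_1 [simp]: "spec_norm (mat 1 :: real^'n^'n) = 1"
proof -
  have id: "(\<lambda>x :: real^'n. mat 1 *v x) = (\<lambda>x. x)"
    by simp
  show ?thesis
    unfolding spec_norm_def id by (rule onorm_id)
qed

lemma spec_norm_add_le: "spec_norm (A + B) \<le> spec_norm A + spec_norm B"
  unfolding spec_norm_def matrix_vector_mult_add_rdistrib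
  by (intro onorm_triangle matrix_vector_mul_bounded_linear)

lemma spec_norm_scaleR [simp]: "spec_norm (r *\<^sub>R A) = \<bar>r\<bar> * spec_norm A"
  unfolding spec_norm_def scaleR_matrix_vector_assoc[symmetric]
  by (intro onorm_scaleR matrix_vector_mul_bounded_linear)

lemma spec_norm_mult_le: "spec_norm (A ** B) \<le> spec_norm A * spec_norm B"
proof -
  have "(\<lambda>x. (A ** B) *v x) = (\<lambda>x. A *v x) \<circ> (\<lambda>x. B *v x)"
    by (auto simp: matrix_vector_mul_assoc)
  then show ?thesis
    unfolding spec_norm_def by (simp add: onorm_compose matrix_vector_mul_bounded_linear)
qed

lemma norm_matrix_mult_le_spec_norm_right:
  fixes M :: "real^'n^'k" and B :: "real^'n^'n"
  shows "norm (M ** B) \<le> norm M * spec_norm B"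
proof -
  have "(norm (M ** B))\<^sup>2 = (\<Sum>i\<in>UNIV. (norm (M $ i v* B))\<^sup>2)"
    by (simp add: norm_vec_def L2_set_def sum_nonneg matrix_matrix_mult_row)
  also have "\<dots> \<le> (\<Sum>i\<in>UNIV. (norm (M $ i) * spec_norm B)\<^sup>2)"
    by (intro sum_mono power_mono)
      (simp_all add: norm_vector_matrix_mult_le mult.commute[of "norm _"])
  also have "\<dots> = (norm M * spec_norm B)\<^sup>2"
    by (simp add: norm_vec_def L2_set_def sum_nonneg power_mult_distrib sum_distrib_right)
  finally show ?thesis
    by (rule power2_le_imp_le) (simp add: spec_norm_nonneg)
qed

lemma norm_matrix_mult_le_spec_norm_left:
  fixes A :: "real^'n^'n" and M :: "real^'k^'n"
  shows "norm (A ** M) \<le> spec_norm A * norm M"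
  using norm_matrix_mult_le_spec_norm_right[of "transpose M" "transpose A"]
  by (simp add: norm_transpose matrix_transpose_mul[symmetric] mult.commute)

lemma norm_le_spec_norm:
  fixes A :: "real^'n^'n"
  shows "norm A \<le> spec_norm A * norm (mat 1 :: real^'n^'n)"
  using norm_matrix_mult_le_spec_norm_left[of A "mat 1 :: real^'n^'n"] by simp

lemma norm_matrix_sandwich_le:
  fixes A B :: "real^'n^'n"
  shows "norm (A ** R ** B) \<le> spec_norm A * norm R * spec_norm B"
proof -
  have "norm (A ** R ** B) \<le> norm (A ** R) * spec_norm B"
    by (rule norm_matrix_mult_le_spec_norm_right)
  also have "\<dots> \<le> spec_norm A * norm R * spec_norm B"
    by (intro mult_right_mono norm_matrix_mult_le_spec_norm_left spec_norm_nonneg)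
  finally show ?thesis .
qed

lemma prodW_cong: "(\<And>i. i < s \<Longrightarrow> W i = V i) \<Longrightarrow> prodW W s = prodW V s"
  by (induction s) auto

lemma prodW_add: "prodW W (m + k) = prodW (\<lambda>i. W (m + i)) k ** prodW W m"
  by (induction k) (simp_all add: matrix_mul_assoc)

lemma prodW_fun_upd_le: "s \<le> t \<Longrightarrow> prodW (W(t := X)) s = prodW W s"
  by (rule prodW_cong) simp

lemma prodW_fun_upd_split:
  assumes "t < s"
  shows "prodW (W(t := X)) s = prodW (\<lambda>i. W (Suc t + i)) (s - Suc t) ** X ** prodW W t"
  using prodW_add[of "W(t := X)" "Suc t" "s - Suc t"] assms
  by (simp add: prodW_fun_upd_le matrix_mul_assoc)

lemma spec_norm_prodW_le:
  "(\<And>i. i < s \<Longrightarrow> spec_norm (W i) \<le> q) \<Longrightarrow> spec_norm (prodW W s) \<le> q ^ s"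
proof (induction s)
  case (Suc s)
  have "spec_norm (prodW W (Suc s)) \<le> spec_norm (W s) * spec_norm (prodW W s)"
    by (simp add: spec_norm_mult_le)
  also have "\<dots> \<le> q * q ^ s"
    using Suc by (intro mult_mono spec_norm_nonneg) (auto intro: order_trans[OF spec_norm_nonneg])
  finally show ?case
    by simp
qed simp

lemma mpc_grad_eqI: "GDERIV (mpc_loss \<Phi> W T h t) (W t) :> D \<Longrightarrow> mpc_grad \<Phi> W T h t = D"
  unfolding mpc_grad_def by (blast intro: the_equality GDERIV_unique)

lemma mpc_grad_eq_0:
  assumes "min (t + h) T \<le> t"
  shows "mpc_grad \<Phi> W T h t = 0"
proof (rule mpc_grad_eqI)
  have "mpc_loss \<Phi> W T h t = (\<lambda>X. 1/2 * (norm (prodW W (min (t + h) T) - \<Phi>))\<^sup>2)"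
    by (intro ext) (simp add: mpc_loss_def prodW_fun_upd_le assms)
  then show "GDERIV (mpc_loss \<Phi> W T h t) (W t) :> 0"
    by (simp add: GDERIV_const)
qed

lemma mpc_grad_eq:
  fixes \<Phi> :: "real^'n^'n" and T h t :: nat
  defines "s \<equiv> min (t + h) T"
  assumes "t < s"
  shows "mpc_grad \<Phi> W T h t =
    transpose (prodW (\<lambda>i. W (Suc t + i)) (s - Suc t)) ** (prodW W s - \<Phi>)
      ** transpose (prodW W t)"
proof (rule mpc_grad_eqI)
  define A B where "A = prodW (\<lambda>i. W (Suc t + i)) (s - Suc t)" and "B = prodW W t"
  have loss: "mpc_loss \<Phi> W T h t = (\<lambda>X. 1/2 * (norm (A ** X ** B - \<Phi>))\<^sup>2)"
    by (intro ext)
      (simp add: mpc_loss_def s_def[symmetric] prodW_fun_upd_split[OF assms(2)] A_def B_def)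
  have "A ** W t ** B = prodW W s"
    using prodW_fun_upd_split[OF assms(2), of W "W t"] by (simp add: A_def B_def)
  then show "GDERIV (mpc_loss \<Phi> W T h t) (W t)
      :> transpose A ** (prodW W s - \<Phi>) ** transpose B"
    using GDERIV_half_sq_norm_linear[OF linear_matrix_sandwich, of A B \<Phi> "W t"]
    unfolding loss adjoint_matrix_sandwich by simp
qed

lemma norm_mpc_grad_le:
  fixes \<Phi> :: "real^'n^'n"
  assumes "\<And>i. i < T \<Longrightarrow> spec_norm (W i) \<le> q" and "1 \<le> q"
  shows "norm (mpc_grad \<Phi> W T h t)
    \<le> q ^ T * (q ^ T * norm (mat 1 :: real^'n^'n) + norm \<Phi>) * q ^ T"
proof (cases "t < min (t + h) T")
  case True
  define s where "s = min (t + h) T"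
  have "t < s" "s \<le> T"
    using True by (simp_all add: s_def)
  have prod_le: "spec_norm (prodW (\<lambda>i. W (j + i)) k) \<le> q ^ T" if "j + k \<le> T" for j k
  proof -
    have "spec_norm (prodW (\<lambda>i. W (j + i)) k) \<le> q ^ k"
      using that by (intro spec_norm_prodW_le assms(1)) simp
    also have "\<dots> \<le> q ^ T"
      using that by (intro power_increasing assms(2)) simp
    finally show ?thesis .
  qed
  have A: "spec_norm (prodW (\<lambda>i. W (Suc t + i)) (s - Suc t)) \<le> q ^ T"
    using \<open>t < s\<close> \<open>s \<le> T\<close> by (intro prod_le) simp
  have B: "spec_norm (prodW W t) \<le> q ^ T"
    using \<open>t < s\<close> \<open>s \<le> T\<close> prod_le[of 0 t] by simp
  have "norm (prodW W s - \<Phi>) \<le> spec_norm (prodW W s) * norm (mat 1 :: real^'n^'n) + norm \<Phi>"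
    using norm_triangle_ineq4[of "prodW W s" \<Phi>] norm_le_spec_norm[of "prodW W s"] by linarith
  also have "\<dots> \<le> q ^ T * norm (mat 1 :: real^'n^'n) + norm \<Phi>"
    using \<open>s \<le> T\<close> prod_le[of 0 s] by (intro add_right_mono mult_right_mono) simp_all
  finally have R: "norm (prodW W s - \<Phi>) \<le> q ^ T * norm (mat 1 :: real^'n^'n) + norm \<Phi>" .
  have "norm (mpc_grad \<Phi> W T h t)
      \<le> spec_norm (prodW (\<lambda>i. W (Suc t + i)) (s - Suc t)) * norm (prodW W s - \<Phi>)
        * spec_norm (prodW W t)"
    using norm_matrix_sandwich_le[of "transpose (prodW (\<lambda>i. W (Suc t + i)) (s - Suc t))"
        "prodW W s - \<Phi>" "transpose (prodW W t)"]
    by (simp add: mpc_grad_eq[OF True] s_def)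
  also have "\<dots> \<le> q ^ T * (q ^ T * norm (mat 1 :: real^'n^'n) + norm \<Phi>) * q ^ T"
    using assms(2) by (intro mult_mono A B R) (simp_all add: spec_norm_nonneg)
  finally show ?thesis .
next
  case False
  then have "mpc_grad \<Phi> W T h t = 0"
    by (intro mpc_grad_eq_0) linarith
  with assms(2) show ?thesis
    by simp
qed

lemma one_plus_div_power_le_exp:
  fixes x :: real
  assumes "0 \<le> x"
  shows "(1 + x / real n) ^ n \<le> exp x"
proof (cases "n = 0")
  case False
  have "(1 + x / real n) ^ n \<le> exp (x / real n) ^ n"
    using assms by (intro power_mono) simp_all
  also have "\<dots> = exp x"
    using False by (simp add: exp_of_nat_mult[symmetric])
  finally show ?thesis .
qed (simp add: assms)

theorem lemma3:
  fixes \<Phi> :: "real^'n^'n" and c :: real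
    and Wt :: "nat \<Rightarrow> nat \<Rightarrow> real^'n^'n"
  assumes "c > 0"
    and "\<And>T t. T \<ge> 1 \<Longrightarrow> t < T \<Longrightarrow> spec_norm (Wt T t) \<le> c"
  shows "\<exists>l1 l2 y1 y2 :: real. l1 \<le> l2 \<and>
    (\<forall>T::nat. T \<ge> 1 \<longrightarrow> (\<forall>\<alpha> \<in> {0<..1}. \<forall>\<beta> \<in> {1 - \<alpha><..1}.
       (let W = (\<lambda>t. mat 1 + (1 / real T) *\<^sub>R Wt T t) in
          (exp l1 - y1) * exp l1 \<le> norm (dL \<Phi> W T \<alpha> \<beta>) \<and>
          norm (dL \<Phi> W T \<alpha> \<beta>) \<le> (exp l2 - y2) * exp l2)))"
proof -
  define M where "M = exp c * (exp c * norm (mat 1 :: real^'n^'n) + norm \<Phi>) * exp c"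
  have bound: "norm (dL \<Phi> (\<lambda>t. mat 1 + (1 / real T) *\<^sub>R Wt T t) T \<alpha> \<beta>) \<le> M"
    if "1 \<le> T" for T \<alpha> \<beta>
  proof -
    let ?q = "1 + c / real T"
    have "spec_norm (mat 1 + (1 / real T) *\<^sub>R Wt T i) \<le> ?q" if "i < T" for i
      using spec_norm_add_le[of "mat 1" "(1 / real T) *\<^sub>R Wt T i"]
        mult_left_mono[OF assms(2)[OF \<open>1 \<le> T\<close> that], of "1 / real T"]
      by simp
    then have "norm (dL \<Phi> (\<lambda>t. mat 1 + (1 / real T) *\<^sub>R Wt T t) T \<alpha> \<beta>)
        \<le> ?q ^ T * (?q ^ T * norm (mat 1 :: real^'n^'n) + norm \<Phi>) * ?q ^ T"
      unfolding dL_def using assms(1) by (intro norm_mpc_grad_le) simp_all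
    also have "\<dots> \<le> M"
      unfolding M_def using one_plus_div_power_le_exp[of c T] assms(1)
      by (intro mult_mono add_right_mono mult_right_mono) simp_all
    finally show ?thesis .
  qed
  show ?thesis
    by (rule exI[of _ 0], rule exI[of _ 0], rule exI[of _ 1], rule exI[of _ "1 - M"])
      (simp add: Let_def bound)
qed

end
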